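(* Suppose the smallest directed sub-block of $D$ has $n$ nodes. Then for every $x\in\mathbb{N}$ with $x<n-2$, every state in $M_{C(x)}$ is on at most two nodes, $M_{C(x)}=M_{C(0)}$, and the order-$x$ cycle-partitioning closed model coincides with the pair-level ($x=0$) model.
   Context: $D=(V,A)$ is a directed graph on $V=\{1,\dots,N\}$ with rates $T_{ij}\ge0$, $T_{ij}>0$ iff $(j,i)\in A$, $T_{ii}=0$. A subsystem state is $\psi^A_W$ with $W\subseteq V$ nonempty, $A:W\to\{S,I,R\}$; $S_i,I_i$ are single-node states; for $n\notin W$, $\psi^A_WI_n$ is the state on $W\cup\{n\}$ extending $A$ with $n$ in state $I$; $h^X_k(\psi^A_W)$ changes the state of $k\in W$ to $X$. $\mathrm{IN}_a(X)$ is the set of nodes that can reach some member of $X$ by traversing at most $a$ arcs. $f_{C(x)}(X,Y,i)=1$ iff $\mathrm{IN}_a(X)\cap\mathrm{IN}_b(Y)=\emptyset$ in $D-i$ for all $a,b\in\mathbb{N}$ with $a+b=x$, else $0$, and by convention $0$ when the second argument is empty. A state $\psi^A_W$ with $A:W\to\{S,I\}$ induces: $\psi^A_W$; $h^S_k(\psi^A_W)$ for $k\in W$ with $A_k=I$ and $T_{kn}>0$ for some $n\in W$ with $A_n=I$; and for each $k\in W$, $n\in V\setminus W$ with $T_{kn}>0$: the state $h^S_k(\psi^A_W)I_n$ if $f_{C(x)}(\{n\},W\setminus\{k\},\{k\})=0$, or the states $h^S_k(\psi^A_W)$, $S_kI_n$, $S_k$ if it equals $1$. $M_{C(x)}$ is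 the smallest set containing all $S_i,I_i$ and closed under induced states. The closed model of order $x$ is the ODE system, one equation per state in $M_{C(x)}$, obtained from the exact Markovian SIR moment equation for $\langle\psi^A_W\rangle$ by replacing $\langle h^S_k(\psi^A_W)I_n\rangle$ with $\langle h^S_k(\psi^A_W)\rangle\langle S_kI_n\rangle/\langle S_k\rangle$ whenever $f_{C(x)}(\{n\},W\setminus\{k\},\{k\})=1$. $D[W]$ is the induced subgraph. A graph is biconnected if it has at least three vertices, is connected and remains connected after deleting any vertex. $D[W]$ is a directed sub-block if some node of $W$ is reachable within $D[W]$ from all others and its underlying undirected graph is biconnected. *)

theory Defs
  imports Complex_Main
begin

text \<open>Network: vertex set V = {1..N}; rates T i j (rate at which node j infects node i);
  arc (j,i) is present iff T i j > 0.  Subsystem states are partial maps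
  psi :: nat \<rightharpoonup> status with W = dom psi.\<close>

datatype status = Sus | Inf | Rec

type_synonym sstate = "nat \<rightharpoonup> status"

definition verts :: "nat \<Rightarrow> nat set" where
  "verts N = {1..N}"

definition arcs_minus :: "nat \<Rightarrow> (nat \<Rightarrow> nat \<Rightarrow> real) \<Rightarrow> nat set \<Rightarrow> (nat \<times> nat) set" where
  "arcs_minus N T K = {(u,v). u \<in> verts N - K \<and> v \<in> verts N - K \<and> T v u > 0}"

definition IN_set :: "nat \<Rightarrow> (nat \<Rightarrow> nat \<Rightarrow> real) \<Rightarrow> nat set \<Rightarrow> nat \<Rightarrow> nat set \<Rightarrow> nat set" where
  "IN_set N T K a X = {v \<in> verts N - K. \<exists>x\<in>X. \<exists>m\<le>a. (v, x) \<in> (arcs_minus N T K) ^^ m}"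

definition fC :: "nat \<Rightarrow> (nat \<Rightarrow> nat \<Rightarrow> real) \<Rightarrow> nat \<Rightarrow> nat set \<Rightarrow> nat set \<Rightarrow> nat set \<Rightarrow> nat" where
  "fC N T x X Y K =
     (if Y = {} then 0
      else if (\<forall>a b. a + b = x \<longrightarrow> IN_set N T K a X \<inter> IN_set N T K b Y = {}) then 1 else 0)"

definition SI_state :: "sstate \<Rightarrow> bool" where
  "SI_state \<psi> \<longleftrightarrow> ran \<psi> \<subseteq> {Sus, Inf}"

inductive_set Mset :: "nat \<Rightarrow> (nat \<Rightarrow> nat \<Rightarrow> real) \<Rightarrow> nat \<Rightarrow> sstate set"
  for N :: nat and T :: "nat \<Rightarrow> nat \<Rightarrow> real" and x :: nat where
  single_S: "i \<in> verts N \<Longrightarrow> [i \<mapsto> Sus] \<in> Mset N T x"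
| single_I: "i \<in> verts N \<Longrightarrow> [i \<mapsto> Inf] \<in> Mset N T x"
| ind_inner: "\<lbrakk>\<psi> \<in> Mset N T x; SI_state \<psi>; \<psi> k = Some Inf; n \<in> dom \<psi>; \<psi> n = Some Inf; T k n > 0\<rbrakk>
      \<Longrightarrow> \<psi>(k \<mapsto> Sus) \<in> Mset N T x"
| ind_open: "\<lbrakk>\<psi> \<in> Mset N T x; SI_state \<psi>; k \<in> dom \<psi>; n \<in> verts N - dom \<psi>; T k n > 0;
      fC N T x {n} (dom \<psi> - {k}) {k} = 0\<rbrakk>
      \<Longrightarrow> \<psi>(k \<mapsto> Sus, n \<mapsto> Inf) \<in> Mset N T x"
| ind_closed1: "\<lbrakk>\<psi> \<in> Mset N T x; SI_state \<psi>; k \<in> dom \<psi>; n \<in> verts N - dom \<psi>; T k n > 0;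
      fC N T x {n} (dom \<psi> - {k}) {k} = 1\<rbrakk>
      \<Longrightarrow> \<psi>(k \<mapsto> Sus) \<in> Mset N T x"
| ind_closed2: "\<lbrakk>\<psi> \<in> Mset N T x; SI_state \<psi>; k \<in> dom \<psi>; n \<in> verts N - dom \<psi>; T k n > 0;
      fC N T x {n} (dom \<psi> - {k}) {k} = 1\<rbrakk>
      \<Longrightarrow> [k \<mapsto> Sus, n \<mapsto> Inf] \<in> Mset N T x"
| ind_closed3: "\<lbrakk>\<psi> \<in> Mset N T x; SI_state \<psi>; k \<in> dom \<psi>; n \<in> verts N - dom \<psi>; T k n > 0;
      fC N T x {n} (dom \<psi> - {k}) {k} = 1\<rbrakk>
      \<Longrightarrow> [k \<mapsto> Sus] \<in> Mset N T x"

text \<open>The (possibly closed) term standing for <h^S_k(psi) I_n> in the order-x closed model;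
  y assigns to each state the value of its variable <.>.\<close>
definition closed_term :: "nat \<Rightarrow> (nat \<Rightarrow> nat \<Rightarrow> real) \<Rightarrow> nat \<Rightarrow> sstate \<Rightarrow> (sstate \<Rightarrow> real)
    \<Rightarrow> nat \<Rightarrow> nat \<Rightarrow> real" where
  "closed_term N T x \<psi> y k n =
     (if fC N T x {n} (dom \<psi> - {k}) {k} = 1
      then y (\<psi>(k \<mapsto> Sus)) * y [k \<mapsto> Sus, n \<mapsto> Inf] / y [k \<mapsto> Sus]
      else y (\<psi>(k \<mapsto> Sus, n \<mapsto> Inf)))"

text \<open>Right-hand side of the exact Markovian SIR moment equation for <psi> (infection rates T,
  recovery rates gamma), with the order-x closure applied to the terms <h^S_k(psi) I_n>
  (for A_k = S one has h^S_k(psi) = psi, so that term is <psi I_n>).\<close>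
definition closed_rhs :: "nat \<Rightarrow> (nat \<Rightarrow> nat \<Rightarrow> real) \<Rightarrow> (nat \<Rightarrow> real) \<Rightarrow> nat \<Rightarrow> sstate
    \<Rightarrow> (sstate \<Rightarrow> real) \<Rightarrow> real" where
  "closed_rhs N T \<gamma> x \<psi> y =
     (\<Sum>k\<in>dom \<psi>.
        (case \<psi> k of
          Some Sus \<Rightarrow>
             - (\<Sum>n\<in>{n \<in> dom \<psi>. \<psi> n = Some Inf}. T k n) * y \<psi>
             - (\<Sum>n\<in>verts N - dom \<psi>. T k n * closed_term N T x \<psi> y k n)
        | Some Inf \<Rightarrow>
               (\<Sum>n\<in>{n \<in> dom \<psi>. \<psi> n = Some Inf}. T k n) * y (\<psi>(k \<mapsto> Sus))
             + (\<Sum>n\<in>verts N - dom \<psi>. T k n * closed_term N T x \<psi> y k n)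
             - \<gamma> k * y \<psi>
        | Some Rec \<Rightarrow> \<gamma> k * y (\<psi>(k \<mapsto> Inf))
        | None \<Rightarrow> 0))"

definition closed_model :: "nat \<Rightarrow> (nat \<Rightarrow> nat \<Rightarrow> real) \<Rightarrow> (nat \<Rightarrow> real) \<Rightarrow> nat
    \<Rightarrow> sstate \<Rightarrow> ((sstate \<Rightarrow> real) \<Rightarrow> real) option" where
  "closed_model N T \<gamma> x =
     (\<lambda>\<psi>. if \<psi> \<in> Mset N T x then Some (closed_rhs N T \<gamma> x \<psi>) else None)"

definition uedges :: "(nat \<Rightarrow> nat \<Rightarrow> real) \<Rightarrow> nat set \<Rightarrow> (nat \<times> nat) set" where
  "uedges T W = {(u,v). u \<in> W \<and> v \<in> W \<and> u \<noteq> v \<and> (T u v > 0 \<or> T v u > 0)}"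

definition uconnected :: "(nat \<Rightarrow> nat \<Rightarrow> real) \<Rightarrow> nat set \<Rightarrow> bool" where
  "uconnected T W \<longleftrightarrow> (\<forall>u\<in>W. \<forall>v\<in>W. (u, v) \<in> (uedges T W)\<^sup>*)"

definition ubiconnected :: "(nat \<Rightarrow> nat \<Rightarrow> real) \<Rightarrow> nat set \<Rightarrow> bool" where
  "ubiconnected T W \<longleftrightarrow> card W \<ge> 3 \<and> uconnected T W \<and> (\<forall>w\<in>W. uconnected T (W - {w}))"

definition darcs :: "(nat \<Rightarrow> nat \<Rightarrow> real) \<Rightarrow> nat set \<Rightarrow> (nat \<times> nat) set" where
  "darcs T W = {(u,v). u \<in> W \<and> v \<in> W \<and> T v u > 0}"

definition directed_subblock :: "nat \<Rightarrow> (nat \<Rightarrow> nat \<Rightarrow> real) \<Rightarrow> nat set \<Rightarrow> bool" where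
  "directed_subblock N T W \<longleftrightarrow> W \<subseteq> verts N \<and>
     (\<exists>r\<in>W. \<forall>u\<in>W. (u, r) \<in> (darcs T W)\<^sup>*) \<and> ubiconnected T W"

end

theory Submission
  imports Defs
begin

text \<open>
  Let \<open>n0\<close> bound the size of every directed sub-block from below.  If \<open>k\<close> has an in-neighbour
  \<open>n\<close> and another neighbour \<open>m\<close>, and some node of \<open>D - k\<close> reaches \<open>n\<close> within \<open>a\<close> arcs and
  \<open>m\<close> within \<open>b\<close> arcs, then a shortest such pair of walks consists of two paths meeting only
  at their start; closed up through \<open>k\<close> they form a cycle on at most \<open>a + b + 2\<close> nodes that is
  a directed sub-block (rooted at \<open>k\<close> or at \<open>m\<close>).  Hence for \<open>x + 2 < n0\<close> the closure
  factor at a pair of adjacent nodes is always \<open>1\<close> and at a single node always \<open>0\<close>,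
  independently of \<open>x\<close>.  So the states generated never leave singletons and adjacent pairs,
  and the generation of the states and the closed equations proceed exactly as for \<open>x = 0\<close>.
\<close>

definition adjacent :: "(nat \<Rightarrow> nat \<Rightarrow> real) \<Rightarrow> nat \<Rightarrow> nat \<Rightarrow> bool" where
  "adjacent T u v \<longleftrightarrow> T u v > 0 \<or> T v u > 0"

lemma adjacent_sym: "adjacent T u v \<Longrightarrow> adjacent T v u"
  by (auto simp: adjacent_def)

lemma sym_uedges: "sym (uedges T W)"
  by (auto simp: sym_def uedges_def)

lemma path_reaches_from_hd:
  assumes "successively (adjacent T) p" "distinct p" "set p \<subseteq> S" "u \<in> set p"
  shows "(hd p, u) \<in> (uedges T S)\<^sup>*"
  using assms
proof (induction p)
  case (Cons x p)
  show ?case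
  proof (cases "u = x")
    case False
    then obtain y q where p: "p = y # q" and "u \<in> set p"
      using Cons.prems(4) by (cases p) auto
    then have "(y, u) \<in> (uedges T S)\<^sup>*"
      using Cons by (simp add: successively_Cons)
    moreover have "(x, y) \<in> uedges T S"
      using Cons.prems p by (auto simp: uedges_def adjacent_def)
    ultimately show ?thesis by (simp add: converse_rtrancl_into_rtrancl)
  qed simp
qed simp

lemma path_uconnected:
  assumes "successively (adjacent T) p" "distinct p"
  shows "uconnected T (set p)"
  unfolding uconnected_def
proof (intro ballI)
  fix u v assume "u \<in> set p" "v \<in> set p"
  then have "(hd p, u) \<in> (uedges T (set p))\<^sup>*" "(hd p, v) \<in> (uedges T (set p))\<^sup>*"
    using path_reaches_from_hd[OF assms] by auto
  then show "(u, v) \<in> (uedges T (set p))\<^sup>*"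
    using sym_rtrancl[OF sym_uedges] by (meson rtrancl_trans symD)
qed

lemma cycle_ubiconnected:
  assumes d: "distinct cyc" and l: "3 \<le> length cyc" and s: "successively (adjacent T) cyc"
    and w: "adjacent T (last cyc) (hd cyc)"
  shows "ubiconnected T (set cyc)"
  unfolding ubiconnected_def
proof (intro conjI ballI)
  show "3 \<le> card (set cyc)" using d l by (simp add: distinct_card)
  show "uconnected T (set cyc)" using path_uconnected[OF s d] .
next
  fix v assume "v \<in> set cyc"
  then obtain xs ys where c: "cyc = xs @ v # ys" by (meson split_list)
  have "successively (adjacent T) (ys @ xs)"
  proof -
    have "ys = [] \<or> xs = [] \<or> adjacent T (last ys) (hd xs)"
      using w c by (cases "ys = [] \<or> xs = []") auto
    then show ?thesis using s c by (auto simp: successively_append_iff successively_Cons)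
  qed
  moreover have "distinct (ys @ xs)" "set (ys @ xs) = set cyc - {v}" using d c by auto
  ultimately show "uconnected T (set cyc - {v})" using path_uconnected by metis
qed

abbreviation walk :: "(nat \<Rightarrow> nat \<Rightarrow> real) \<Rightarrow> nat list \<Rightarrow> bool" where
  "walk T p \<equiv> successively (\<lambda>u v. T v u > 0) p"

lemma walk_adjacent: "walk T p \<Longrightarrow> successively (adjacent T) p"
  by (erule successively_mono) (auto simp: adjacent_def)

lemma walk_of_relpow_arcs_minus:
  assumes "(u, v) \<in> arcs_minus N T K ^^ i" "u \<in> verts N - K"
  shows "\<exists>p. hd p = u \<and> last p = v \<and> length p = Suc i \<and> walk T p \<and> set p \<subseteq> verts N - K"
  using assms
proof (induction i arbitrary: u)
  case 0 then show ?case by (intro exI[of _ "[u]"]) auto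
next
  case (Suc i)
  then obtain y where y: "(u, y) \<in> arcs_minus N T K" "(y, v) \<in> arcs_minus N T K ^^ i"
    by (meson relpow_Suc_D2)
  then have "y \<in> verts N - K" "T y u > 0" unfolding arcs_minus_def by auto
  with Suc.IH[OF y(2)] obtain p
    where "hd p = y" "last p = v" "length p = Suc i" "walk T p" "set p \<subseteq> verts N - K" by blast
  with \<open>T y u > 0\<close> Suc.prems(2) show ?case
    by (intro exI[of _ "u # p"]) (cases p; auto simp: successively_Cons)
qed

lemma walk_reaches_last:
  assumes "walk T p" "set p \<subseteq> W" "u \<in> set p"
  shows "(u, last p) \<in> (darcs T W)\<^sup>*"
  using assms
proof (induction p arbitrary: u)
  case (Cons x p)
  show ?case
  proof (cases p)
    case (Cons y q)
    have "(x, y) \<in> darcs T W" using Cons.prems \<open>p = y # q\<close> unfolding darcs_def by auto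
    moreover have "\<And>u. u \<in> set p \<Longrightarrow> (u, last p) \<in> (darcs T W)\<^sup>*"
      using Cons.IH Cons.prems \<open>p = y # q\<close> by (auto simp: successively_Cons)
    ultimately show ?thesis
      using Cons.prems(3) \<open>p = y # q\<close> by (auto intro: converse_rtrancl_into_rtrancl)
  qed (use Cons.prems in simp)
qed simp

lemma walk_shortcut:
  assumes "walk T p" "\<not> distinct p"
  obtains p' where "p' \<noteq> []" "walk T p'" "hd p' = hd p" "last p' = last p" "set p' \<subseteq> set p"
    "length p' < length p"
proof -
  obtain xs ys zs y where p: "p = xs @ [y] @ ys @ [y] @ zs"
    using not_distinct_decomp[OF assms(2)] by blast
  have "walk T ((xs @ [y]) @ ys @ [y] @ zs)" "walk T ((xs @ [y] @ ys) @ [y] @ zs)"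
    using assms(1) unfolding p by simp_all
  then have "walk T (xs @ [y])" "walk T ([y] @ zs)"
    unfolding successively_append_iff by auto
  then have "walk T (xs @ [y] @ zs)"
    by (cases zs) (auto simp: successively_append_iff)
  then show ?thesis
    using that[of "xs @ [y] @ zs"] by (cases xs) (auto simp: p)
qed

definition fork :: "(nat \<Rightarrow> nat \<Rightarrow> real) \<Rightarrow> nat list \<Rightarrow> nat list \<Rightarrow> bool" where
  "fork T p1 p2 \<longleftrightarrow> p1 \<noteq> [] \<and> p2 \<noteq> [] \<and> hd p1 = hd p2 \<and> walk T p1 \<and> walk T p2
     \<and> distinct p1 \<and> distinct p2 \<and> set p1 \<inter> set p2 = {hd p1}"

lemma walks_contain_fork:
  assumes "walk T q1" "walk T q2" "q1 \<noteq> []" "q2 \<noteq> []" "hd q1 = hd q2"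
  shows "\<exists>p1 p2. fork T p1 p2 \<and> last p1 = last q1 \<and> last p2 = last q2
           \<and> set p1 \<subseteq> set q1 \<and> set p2 \<subseteq> set q2 \<and> length p1 + length p2 \<le> length q1 + length q2"
  using assms
proof (induction "length q1 + length q2" arbitrary: q1 q2 rule: less_induct)
  case less
  consider "\<not> distinct q1" | "\<not> distinct q2" | z where "z \<in> set q1" "z \<in> set q2" "z \<noteq> hd q1"
    | "fork T q1 q2"
  proof (cases "distinct q1 \<and> distinct q2 \<and> set q1 \<inter> set q2 = {hd q1}")
    case True
    with less.prems that(4) show ?thesis by (simp add: fork_def)
  next
    case False
    have "hd q1 \<in> set q1 \<inter> set q2" using less.prems by (metis IntI list.set_sel(1))
    with False that(1-3) show ?thesis by blast
  qed
  then show ?case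
  proof cases
    case 1
    with walk_shortcut[OF less.prems(1)] obtain q' where "q' \<noteq> []" "walk T q'" "hd q' = hd q1"
      "last q' = last q1" "set q' \<subseteq> set q1" "length q' < length q1" by metis
    with less.hyps[of q' q2] less.prems show ?thesis by fastforce
  next
    case 2
    with walk_shortcut[OF less.prems(2)] obtain q' where "q' \<noteq> []" "walk T q'" "hd q' = hd q2"
      "last q' = last q2" "set q' \<subseteq> set q2" "length q' < length q2" by metis
    with less.hyps[of q1 q'] less.prems show ?thesis by fastforce
  next
    case 3
    obtain xs ys where q1: "q1 = xs @ z # ys" using \<open>z \<in> set q1\<close> by (meson split_list)
    obtain us vs where q2: "q2 = us @ z # vs" using \<open>z \<in> set q2\<close> by (meson split_list)
    have "xs \<noteq> []" using q1 \<open>z \<noteq> hd q1\<close> by auto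
    moreover have "walk T (z # ys)" "walk T (z # vs)"
      using less.prems(1,2) unfolding q1 q2 by (simp_all add: successively_append_iff)
    ultimately show ?thesis
      using less.hyps[of "z # ys" "z # vs"] unfolding q1 q2 by fastforce
  qed (use less.prems in auto)
qed

lemma fork_cycle_ubiconnected:
  assumes f: "fork T p1 p2" and ends: "last p1 \<noteq> last p2" and k: "k \<notin> set p1 \<union> set p2"
    and adj1: "adjacent T k (last p1)" and adj2: "adjacent T k (last p2)"
  shows "ubiconnected T (insert k (set p1 \<union> set p2))"
    and "card (insert k (set p1 \<union> set p2)) = length p1 + length p2"
proof -
  obtain w t1 t2 where p1: "p1 = w # t1" and p2: "p2 = w # t2"
    using f unfolding fork_def by (cases p1; cases p2) auto
  define cyc where "cyc = rev p1 @ t2 @ [k]"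
  have set_cyc: "set cyc = insert k (set p1 \<union> set p2)"
    unfolding cyc_def p1 p2 by auto
  have "set p1 \<inter> set t2 = {}"
    using f unfolding fork_def p1 p2 by auto
  then have dist: "distinct cyc"
    using f k unfolding fork_def cyc_def p2 by auto
  have len: "length cyc = length p1 + length p2"
    unfolding cyc_def p2 by simp
  have long: "3 \<le> length cyc"
    using ends unfolding len p1 p2 by (cases t1; cases t2) auto
  have adj_cyc: "successively (adjacent T) cyc"
  proof -
    have "successively (adjacent T) (rev p1)"
      using walk_adjacent[of T p1] f by (simp add: fork_def successively_mono adjacent_sym)
    moreover have "successively (adjacent T) (w # t2)"
      using walk_adjacent[of T p2] f by (simp add: fork_def p2)
    ultimately have "successively (adjacent T) (rev p1 @ t2)"
      unfolding p1 by (auto simp: successively_append_iff successively_Cons)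
    moreover have "last (rev p1 @ t2) = last p2"
      unfolding p1 p2 by (cases t2) auto
    ultimately show ?thesis
      using adjacent_sym[OF adj2] unfolding cyc_def
      by (simp add: successively_append_iff[of _ "rev p1 @ t2" "[k]", simplified])
  qed
  have "adjacent T (last cyc) (hd cyc)"
    using adj1 f unfolding cyc_def fork_def by (simp add: hd_append hd_rev)
  with cycle_ubiconnected[OF dist long adj_cyc] set_cyc
  show "ubiconnected T (insert k (set p1 \<union> set p2))" by simp
  show "card (insert k (set p1 \<union> set p2)) = length p1 + length p2"
    using distinct_card[OF dist] set_cyc len by simp
qed

lemma walks_into_arc_rooted:
  assumes w1: "walk T p1" "p1 \<noteq> []" and w2: "walk T p2" "p2 \<noteq> []"
    and arc: "T k (last p1) > 0" and adj: "adjacent T k (last p2)"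
  defines "W \<equiv> insert k (set p1 \<union> set p2)"
  shows "\<exists>r\<in>W. \<forall>u\<in>W. (u, r) \<in> (darcs T W)\<^sup>*"
proof -
  have W: "set p1 \<subseteq> W" "set p2 \<subseteq> W" "k \<in> W" "\<And>u. u \<in> W \<Longrightarrow> u = k \<or> u \<in> set p1 \<or> u \<in> set p2"
    unfolding W_def by auto
  have to_n: "(u, last p1) \<in> (darcs T W)\<^sup>*" if "u \<in> set p1" for u
    using walk_reaches_last[OF w1(1) W(1) that] .
  have to_m: "(u, last p2) \<in> (darcs T W)\<^sup>*" if "u \<in> set p2" for u
    using walk_reaches_last[OF w2(1) W(2) that] .
  have ends: "last p1 \<in> W" "last p2 \<in> W"
    using w1(2) w2(2) W by auto
  have nk: "(last p1, k) \<in> darcs T W"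
    using arc ends W(3) unfolding darcs_def by auto
  show ?thesis
  proof (cases "T k (last p2) > 0")
    case True
    then have mk: "(last p2, k) \<in> darcs T W"
      using ends W(3) unfolding darcs_def by auto
    have "(u, k) \<in> (darcs T W)\<^sup>*" if "u \<in> W" for u
      using W(4)[OF that] to_n nk to_m mk by (blast intro: rtrancl_into_rtrancl)
    with W(3) show ?thesis by blast
  next
    case False
    then have km: "(k, last p2) \<in> darcs T W"
      using adj ends W(3) unfolding darcs_def adjacent_def by auto
    have "(u, last p2) \<in> (darcs T W)\<^sup>*" if "u \<in> W" for u
      using W(4)[OF that] to_n nk km to_m by (blast intro: rtrancl_into_rtrancl)
    with ends show ?thesis by blast
  qed
qed

lemma common_ancestor_subblock_bound:
  assumes large: "\<And>W. directed_subblock N T W \<Longrightarrow> n0 \<le> card W"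
    and k: "k \<in> verts N" and nm: "n \<noteq> m" and arc: "T k n > 0" and adj: "adjacent T k m"
    and w: "w \<in> IN_set N T {k} a {n}" "w \<in> IN_set N T {k} b {m}"
  shows "n0 \<le> a + b + 2"
proof -
  obtain i j where ij: "i \<le> a" "j \<le> b" "w \<in> verts N - {k}"
    "(w, n) \<in> arcs_minus N T {k} ^^ i" "(w, m) \<in> arcs_minus N T {k} ^^ j"
    using w unfolding IN_set_def by auto
  obtain q1 q2 where q: "hd q1 = w" "last q1 = n" "length q1 = Suc i" "walk T q1"
      "hd q2 = w" "last q2 = m" "length q2 = Suc j" "walk T q2"
      and sub: "set q1 \<union> set q2 \<subseteq> verts N - {k}"
    using walk_of_relpow_arcs_minus[OF ij(4,3)] walk_of_relpow_arcs_minus[OF ij(5,3)]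
    by (metis Un_least)
  moreover have "q1 \<noteq> []" "q2 \<noteq> []" using q(3,7) by auto
  ultimately obtain p1 p2 where f: "fork T p1 p2" and ends: "last p1 = n" "last p2 = m"
    and "set p1 \<subseteq> set q1" "set p2 \<subseteq> set q2"
    and "length p1 + length p2 \<le> length q1 + length q2"
    using walks_contain_fork[of T q1 q2] by metis
  then have sub': "set p1 \<union> set p2 \<subseteq> verts N - {k}" and len: "length p1 + length p2 \<le> a + b + 2"
    using sub q(3,7) ij(1,2) by auto
  let ?W = "insert k (set p1 \<union> set p2)"
  have "k \<notin> set p1 \<union> set p2" using sub' by blast
  then have "ubiconnected T ?W" "card ?W = length p1 + length p2"
    using fork_cycle_ubiconnected[OF f] nm arc adj ends by (auto simp: adjacent_def)
  moreover have "\<exists>r\<in>?W. \<forall>u\<in>?W. (u, r) \<in> (darcs T ?W)\<^sup>*"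
    using walks_into_arc_rooted[of T p1 p2 k] f arc adj ends by (simp add: fork_def)
  ultimately have "directed_subblock N T ?W"
    using sub' k unfolding directed_subblock_def by blast
  with large \<open>card ?W = _\<close> len show ?thesis by fastforce
qed

lemma fC_eq_1_of_arc_and_adjacent:
  assumes large: "\<And>W. directed_subblock N T W \<Longrightarrow> n0 \<le> card W" and x: "x + 2 < n0"
    and k: "k \<in> verts N" and nm: "n \<noteq> m" and arc: "T k n > 0" and adj: "adjacent T k m"
  shows "fC N T x {n} {m} {k} = 1"
proof -
  have "IN_set N T {k} a {n} \<inter> IN_set N T {k} b {m} = {}" if "a + b = x" for a b
    using common_ancestor_subblock_bound[OF large k nm arc adj] that x by fastforce
  then show ?thesis unfolding fC_def by simp
qed

definition node_or_link :: "nat \<Rightarrow> (nat \<Rightarrow> nat \<Rightarrow> real) \<Rightarrow> sstate \<Rightarrow> bool" where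
  "node_or_link N T \<psi> \<longleftrightarrow> (\<exists>i\<in>verts N. dom \<psi> = {i})
     \<or> (\<exists>u\<in>verts N. \<exists>v\<in>verts N. u \<noteq> v \<and> adjacent T u v \<and> dom \<psi> = {u, v})"

lemma node_or_link_dom: "node_or_link N T \<psi> \<Longrightarrow> dom \<psi> \<subseteq> verts N \<and> card (dom \<psi>) \<le> 2"
  unfolding node_or_link_def by (elim disjE bexE conjE) simp_all

lemma fC_node_or_link:
  assumes large: "\<And>W. directed_subblock N T W \<Longrightarrow> n0 \<le> card W" and x: "x + 2 < n0"
    and \<psi>: "node_or_link N T \<psi>" and k: "k \<in> dom \<psi>" and n: "n \<in> verts N - dom \<psi>"
    and arc: "T k n > 0"
  shows "fC N T x {n} (dom \<psi> - {k}) {k} = (if dom \<psi> = {k} then 0 else 1)"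
proof (cases "dom \<psi> = {k}")
  case False
  with k have "\<not> (\<exists>i\<in>verts N. dom \<psi> = {i})" by (metis singletonD)
  with \<psi> obtain u v where "u \<in> verts N" "v \<in> verts N" "u \<noteq> v" "adjacent T u v"
    "dom \<psi> = {u, v}"
    unfolding node_or_link_def by blast
  with k obtain m where m: "dom \<psi> = {k, m}" "m \<noteq> k" "adjacent T k m" "k \<in> verts N"
    by (metis adjacent_sym insert_commute insertE singletonD)
  moreover have "n \<noteq> m" using n m(1) by auto
  ultimately show ?thesis
    using fC_eq_1_of_arc_and_adjacent[OF large x m(4) _ arc m(3)] by auto
qed (simp add: fC_def)

lemma Mset_node_or_link:
  assumes large: "\<And>W. directed_subblock N T W \<Longrightarrow> n0 \<le> card W" and x: "x + 2 < n0"
    and "\<psi> \<in> Mset N T x"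
  shows "node_or_link N T \<psi>"
  using assms(3)
proof (induction rule: Mset.induct)
  case (single_S i)
  then show ?case unfolding node_or_link_def by (intro disjI1 bexI[of _ i]) auto
next
  case (single_I i)
  then show ?case unfolding node_or_link_def by (intro disjI1 bexI[of _ i]) auto
next
  case (ind_inner \<psi> k n)
  then have "dom (\<psi>(k \<mapsto> Sus)) = dom \<psi>" by auto
  with ind_inner.IH show ?case by (simp only: node_or_link_def)
next
  case (ind_open \<psi> k n)
  then have "dom \<psi> = {k}"
    using fC_node_or_link[OF large x] by (metis zero_neq_one)
  then have "dom (\<psi>(k \<mapsto> Sus, n \<mapsto> Inf)) = {k, n}" "k \<in> verts N"
    using node_or_link_dom[OF ind_open.IH] by auto
  with ind_open.hyps(4,5) show ?case
    unfolding node_or_link_def adjacent_def by blast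
next
  case (ind_closed1 \<psi> k n)
  then have "dom (\<psi>(k \<mapsto> Sus)) = dom \<psi>" by auto
  with ind_closed1.IH show ?case by (simp only: node_or_link_def)
next
  case (ind_closed2 \<psi> k n)
  then have "dom [k \<mapsto> Sus, n \<mapsto> Inf] = {k, n}" "k \<in> verts N"
    using node_or_link_dom[OF ind_closed2.IH] by auto
  with ind_closed2.hyps(4,5) show ?case
    unfolding node_or_link_def adjacent_def by blast
next
  case (ind_closed3 \<psi> k n)
  then show ?case
    using node_or_link_dom[OF ind_closed3.IH] unfolding node_or_link_def by auto
qed

lemma fC_order_independent:
  assumes large: "\<And>W. directed_subblock N T W \<Longrightarrow> n0 \<le> card W"
    and "x + 2 < n0" "y + 2 < n0" and "node_or_link N T \<psi>"
    and "k \<in> dom \<psi>" "n \<in> verts N - dom \<psi>" "T k n > 0"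
  shows "fC N T x {n} (dom \<psi> - {k}) {k} = fC N T y {n} (dom \<psi> - {k}) {k}"
  using fC_node_or_link[OF large assms(2,4-7)] fC_node_or_link[OF large assms(3,4-7)] by simp

lemma Mset_order_independent:
  assumes large: "\<And>W. directed_subblock N T W \<Longrightarrow> n0 \<le> card W"
    and x: "x + 2 < n0" and y: "y + 2 < n0" and "\<psi> \<in> Mset N T x"
  shows "\<psi> \<in> Mset N T y"
  using assms(4)
proof (induction rule: Mset.induct)
  case (ind_open \<psi> k n)
  with fC_order_independent[OF large x y Mset_node_or_link[OF large x]] show ?case
    by (intro Mset.ind_open) auto
next
  case (ind_closed1 \<psi> k n)
  with fC_order_independent[OF large x y Mset_node_or_link[OF large x]] show ?case
    by (intro Mset.ind_closed1) auto
next
  case (ind_closed2 \<psi> k n)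
  with fC_order_independent[OF large x y Mset_node_or_link[OF large x]] show ?case
    by (intro Mset.ind_closed2) auto
next
  case (ind_closed3 \<psi> k n)
  with fC_order_independent[OF large x y Mset_node_or_link[OF large x]] show ?case
    by (intro Mset.ind_closed3) auto
qed (blast intro: Mset.intros)+

lemma closed_rhs_order_independent:
  assumes large: "\<And>W. directed_subblock N T W \<Longrightarrow> n0 \<le> card W"
    and x: "x + 2 < n0" and y: "y + 2 < n0" and \<psi>: "node_or_link N T \<psi>"
    and T_nonneg: "\<forall>i j. T i j \<ge> 0"
  shows "closed_rhs N T \<gamma> x \<psi> = closed_rhs N T \<gamma> y \<psi>"
proof
  fix Y
  have "T k n * closed_term N T x \<psi> Y k n = T k n * closed_term N T y \<psi> Y k n"
    if "k \<in> dom \<psi>" "n \<in> verts N - dom \<psi>" for k n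
  proof (cases "T k n > 0")
    case True
    with fC_order_independent[OF large x y \<psi> that] show ?thesis
      unfolding closed_term_def by simp
  next
    case False
    then have "T k n = 0" using T_nonneg[rule_format, of k n] by linarith
    then show ?thesis by simp
  qed
  then have "(\<Sum>n\<in>verts N - dom \<psi>. T k n * closed_term N T x \<psi> Y k n)
      = (\<Sum>n\<in>verts N - dom \<psi>. T k n * closed_term N T y \<psi> Y k n)" if "k \<in> dom \<psi>" for k
    using that by (intro sum.cong) auto
  then show "closed_rhs N T \<gamma> x \<psi> Y = closed_rhs N T \<gamma> y \<psi> Y"
    unfolding closed_rhs_def by (intro sum.cong) (auto split: option.split status.split)
qed

theorem mainTheorem13:
  fixes N n x :: nat and T :: "nat \<Rightarrow> nat \<Rightarrow> real" and \<gamma> :: "nat \<Rightarrow> real"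
  assumes T_nonneg: "\<forall>i j. T i j \<ge> 0"
    and T_diag: "\<forall>i. T i i = 0"
    and T_supp: "\<forall>i j. T i j > 0 \<longrightarrow> i \<in> verts N \<and> j \<in> verts N"
    and smallest: "(\<exists>W. directed_subblock N T W \<and> card W = n)"
      "\<forall>W. directed_subblock N T W \<longrightarrow> n \<le> card W"
    and x_bound: "x + 2 < n"
  shows "(\<forall>\<psi>\<in>Mset N T x. card (dom \<psi>) \<le> 2)
       \<and> Mset N T x = Mset N T 0
       \<and> closed_model N T \<gamma> x = closed_model N T \<gamma> 0"
proof -
  note large = smallest(2)[rule_format]
  have zero: "0 + 2 < n" using x_bound by simp
  have node_or_link: "node_or_link N T \<psi>" if "\<psi> \<in> Mset N T x" for \<psi>
    using Mset_node_or_link[OF large x_bound that] .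
  have M: "Mset N T x = Mset N T 0"
    using Mset_order_independent[OF large x_bound zero]
      Mset_order_independent[OF large zero x_bound] by blast
  have "closed_model N T \<gamma> x \<psi> = closed_model N T \<gamma> 0 \<psi>" for \<psi>
    using closed_rhs_order_independent[OF large x_bound zero node_or_link T_nonneg] M
    unfolding closed_model_def by simp
  with node_or_link M show ?thesis
    using node_or_link_dom by blast
qed

end
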